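(* Let $f(\pi)=\pi f_1(0,\pi)+(1-\pi)f_0(0,\pi)$ and suppose $|f'(\pi)|\le L_{UN}$ for all $\pi\in[0,1]$ with some $L_{UN}<1$ (so the unconstrained policy reaches equality). Suppose $\pi_0(1|A)\ge\pi_0(1|B)$ and $g_Au(1)+(1-g_A)u(0)\le0$, and work in continuous time. Then: (i) $\max_{\pi\in[0,1]}|f_1(0,\pi)-f_0(0,\pi)|<1$, and the AA1 policy applied at all times reaches equality in continuous time; (ii) letting $\pi_t^{UN}(1|\cdot)$ and $\pi_t^{AA1}(1|\cdot)$ be the continuous-time trajectories from the same initial profiles under UN and under AA1 respectively, and $U_t(UN)$, $U_t(AA1)$ the institutional utilities of the respective policies evaluated on the respective profiles at time $t$, we have $U_t(UN)\ge U_t(AA1)$ for all $t\ge0$.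
   Context: Two groups $A,B$ with population fractions $g_A\in[0,1]$, $g_B=1-g_A$; $\neg j$ is the other group. Group $j$ has qualification profile $\pi_t(1|j)\in[0,1]$, $\pi_t(0|j)=1-\pi_t(1|j)$. A policy assigns $\tau(v;j)\in[0,1]$; utilities $u(0)\le0\le u(1)$; institutional utility $U_t(\tau)=\sum_jg_j\sum_vu(v)\tau(v;j)\pi_t(v|j)$. Selection rates $\beta_t(v;j)=\tau(v;j)\pi_t(v|j)$. Dynamics: continuously differentiable $f_0,f_1:[0,1]^2\to[0,1]$; continuous time $\frac{d}{dt}\pi_t(1|j)=\pi_t(1|j)(f_1(\beta_t(0;j),\beta_t(1;j))-1)+(1-\pi_t(1|j))f_0(\beta_t(0;j),\beta_t(1;j))$, policy determined by current profiles. UN: $\tau(1;j)=1,\tau(0;j)=0$, so each group follows $\dot\pi=f(\pi)-\pi$. Group $j$ is advantaged at $t$ if $\pi_t(1|j)\ge\pi_t(1|\neg j)$. AA1 w.r.t. advantaged $j$: $\tau(1;j)=\pi_t(1|\neg j)/\pi_t(1|j)$, $\tau(0;j)=0$, $\tau(1;\neg j)=1$, $\tau(0;\neg j)=0$ (selection rates $\beta_t(0;\cdot)=0$, $\beta_t(1;\cdot)=\pi_t(1|\neg j)$ for both groups); this is the utility-maximizing policy under the constraint of equal total selection rates when $g_ju(1)+(1-g_j)u(0)\le0$. Applied at all times w.r.t. the currently advantaged group. Reaching equality: $|\pi_t(1|A)-\pi_t(1|B)|\to0$ as $t\to\infty$. *)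

theory Defs
  imports "HOL-Analysis.Analysis"
begin

datatype grp = GA | GB

fun other :: "grp \<Rightarrow> grp" where
  "other GA = GB" | "other GB = GA"

text \<open>A profile maps each group j to pi(1|j). pi(0|j) = 1 - pi(1|j).\<close>
definition prof :: "(grp \<Rightarrow> real) \<Rightarrow> nat \<Rightarrow> grp \<Rightarrow> real" where
  "prof p v j = (if v = 1 then p j else 1 - p j)"

definition gfrac :: "real \<Rightarrow> grp \<Rightarrow> real" where
  "gfrac gA j = (if j = GA then gA else 1 - gA)"

definition inst_utility :: "real \<Rightarrow> (nat \<Rightarrow> real) \<Rightarrow> (nat \<Rightarrow> grp \<Rightarrow> real) \<Rightarrow> (grp \<Rightarrow> real) \<Rightarrow> real" where
  "inst_utility gA u tau p =
     (\<Sum>j\<in>(UNIV::grp set). gfrac gA j * (\<Sum>v\<in>{0::nat,1}. u v * tau v j * prof p v j))"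

definition sel_rate :: "(nat \<Rightarrow> grp \<Rightarrow> real) \<Rightarrow> (grp \<Rightarrow> real) \<Rightarrow> nat \<Rightarrow> grp \<Rightarrow> real" where
  "sel_rate tau p v j = tau v j * prof p v j"

definition UN_policy :: "(grp \<Rightarrow> real) \<Rightarrow> nat \<Rightarrow> grp \<Rightarrow> real" where
  "UN_policy p v j = (if v = 1 then 1 else 0)"

definition AA1_wrt :: "grp \<Rightarrow> (grp \<Rightarrow> real) \<Rightarrow> nat \<Rightarrow> grp \<Rightarrow> real" where
  "AA1_wrt jadv p v j =
     (if v = 1 then (if j = jadv then p (other jadv) / p jadv else 1) else 0)"

text \<open>Currently advantaged group (ties resolved in favour of A; either choice gives
  the same selection rates).\<close>
definition advantaged :: "(grp \<Rightarrow> real) \<Rightarrow> grp" where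
  "advantaged p = (if p GA \<ge> p GB then GA else GB)"

definition AA1_policy :: "(grp \<Rightarrow> real) \<Rightarrow> nat \<Rightarrow> grp \<Rightarrow> real" where
  "AA1_policy p = AA1_wrt (advantaged p) p"

definition ct_trajectory ::
  "(real \<Rightarrow> real \<Rightarrow> real) \<Rightarrow> (real \<Rightarrow> real \<Rightarrow> real) \<Rightarrow>
   ((grp \<Rightarrow> real) \<Rightarrow> nat \<Rightarrow> grp \<Rightarrow> real) \<Rightarrow> (real \<Rightarrow> grp \<Rightarrow> real) \<Rightarrow> bool" where
  "ct_trajectory f0 f1 pol x \<longleftrightarrow>
     (\<forall>t\<ge>0. \<forall>j. x t j \<in> {0..1}) \<and>
     (\<forall>t\<ge>0. \<forall>j. ((\<lambda>s. x s j) has_real_derivative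
        (let \<beta> = sel_rate (pol (x t)) (x t) in
           x t j * (f1 (\<beta> 0 j) (\<beta> 1 j) - 1) + (1 - x t j) * f0 (\<beta> 0 j) (\<beta> 1 j)))
       (at t within {0..}))"

definition reaches_equality :: "(real \<Rightarrow> grp \<Rightarrow> real) \<Rightarrow> bool" where
  "reaches_equality x \<longleftrightarrow> ((\<lambda>t. \<bar>x t GA - x t GB\<bar>) \<longlongrightarrow> 0) at_top"

definition C1_on_square :: "(real \<Rightarrow> real \<Rightarrow> real) \<Rightarrow> bool" where
  "C1_on_square h \<longleftrightarrow>
     (\<exists>D1 D2 :: real \<times> real \<Rightarrow> real.
        continuous_on ({0..1} \<times> {0..1}) D1 \<and> continuous_on ({0..1} \<times> {0..1}) D2 \<and>
        (\<forall>z\<in>{0..1} \<times> {0..1}.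
           ((\<lambda>w. h (fst w) (snd w)) has_derivative (\<lambda>d. D1 z * fst d + D2 z * snd d))
             (at z within {0..1} \<times> {0..1})))"

end

theory Submission imports Defs begin

text \<open>Under AA1 both groups are selected at the rate \<open>m = min \<pi>(1|A) \<pi>(1|B)\<close>, so the gap
  \<open>d = \<pi>(1|A) - \<pi>(1|B)\<close> satisfies the linear equation \<open>d' = d (f\<^sub>1(0,m) - f\<^sub>0(0,m) - 1)\<close>.
  The coefficient is at most \<open>max |f\<^sub>1(0,\<cdot>) - f\<^sub>0(0,\<cdot>)| - 1 < 0\<close>: a gap of 1 at some \<open>\<pi>\<close> would make
  \<open>\<pi>\<close> an extremum of both slices, forcing \<open>|f'(\<pi>)| \<ge> 1\<close>. Hence \<open>d\<close> stays nonnegative and decays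
  exponentially. Since \<open>|f'| < 1\<close>, the map \<open>\<pi> \<mapsto> f(\<pi>) - \<pi>\<close> is nonincreasing, which makes solutions of
  \<open>\<pi>' = f(\<pi>) - \<pi>\<close> order preserving and unique. Under AA1 the disadvantaged group B obeys exactly
  this equation, so it follows its UN trajectory, while under UN group A stays ahead. AA1 thus earns
  \<open>u(1) \<pi>(1|B)\<close> and UN earns \<open>u(1) (g\<^sub>A \<pi>(1|A) + g\<^sub>B \<pi>(1|B))\<close>, which is at least as much.\<close>

lemma nonneg_forward_invariant:
  fixes d D :: "real \<Rightarrow> real"
  assumes d0: "d 0 \<ge> 0"
    and der: "\<And>t. t \<ge> 0 \<Longrightarrow> (d has_real_derivative D t) (at t within {0..})"
    and inward: "\<And>t. t \<ge> 0 \<Longrightarrow> d t < 0 \<Longrightarrow> D t \<ge> 0"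
    and t: "t \<ge> 0"
  shows "d t \<ge> 0"
proof (rule ccontr)
  assume neg: "\<not> d t \<ge> 0"
  have "continuous_on {0..} d"
    unfolding continuous_on_eq_continuous_within using der DERIV_continuous by blast
  hence cont: "continuous_on {0..t} d" by (rule continuous_on_subset) auto
  define S where "S = d -` {0..} \<inter> {0..t}"
  have "compact S"
    unfolding S_def using closed_vimage_Int[OF _ cont, of "{0..}"]
    by (auto simp: compact_eq_bounded_closed bounded_Int)
  moreover have "0 \<in> S" using d0 t by (auto simp: S_def)
  ultimately obtain s0 where s0: "s0 \<in> S" "\<And>y. y \<in> S \<Longrightarrow> y \<le> s0"
    using continuous_attains_sup[of S "\<lambda>x. x"] by (auto intro: continuous_on_id)
  have "s0 < t" using s0(1) neg by (auto simp: S_def less_eq_real_def)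
  have neg_after: "d y < 0" if "s0 < y" "y \<le> t" for y
    using s0(2)[of y] that s0(1) by (force simp: S_def)
  have "d s0 \<le> d t"
  proof (rule DERIV_nonneg_imp_increasing_open[of s0 t d])
    show "s0 \<le> t" using \<open>s0 < t\<close> by simp
    show "continuous_on {s0..t} d"
      by (rule continuous_on_subset[OF cont]) (use s0(1) in \<open>auto simp: S_def\<close>)
    fix x assume x: "s0 < x" "x < t"
    have "x > 0" using x s0(1) by (auto simp: S_def)
    hence "at x within {0..} = at x" by (intro at_within_interior) auto
    hence "DERIV d x :> D x" using der[of x] \<open>x > 0\<close> by simp
    moreover have "D x \<ge> 0" using inward[of x] neg_after[of x] x \<open>x > 0\<close> by auto
    ultimately show "\<exists>y. DERIV d x :> y \<and> y \<ge> 0" by blast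
  qed
  thus False using s0(1) neg by (auto simp: S_def)
qed

lemma antitone_ODE_comparison:
  fixes y z g :: "real \<Rightarrow> real"
  assumes g_antitone: "\<And>a b. a \<in> S \<Longrightarrow> b \<in> S \<Longrightarrow> a \<le> b \<Longrightarrow> g b \<le> g a"
    and y_in: "\<And>t. t \<ge> 0 \<Longrightarrow> y t \<in> S" and z_in: "\<And>t. t \<ge> 0 \<Longrightarrow> z t \<in> S"
    and y_ODE: "\<And>t. t \<ge> 0 \<Longrightarrow> (y has_real_derivative g (y t)) (at t within {0..})"
    and z_ODE: "\<And>t. t \<ge> 0 \<Longrightarrow> (z has_real_derivative g (z t)) (at t within {0..})"
    and "z 0 \<le> y 0" and "t \<ge> 0"
  shows "z t \<le> y t"
proof -
  have "y t - z t \<ge> 0"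
  proof (rule nonneg_forward_invariant[where d = "\<lambda>s. y s - z s" and D = "\<lambda>s. g (y s) - g (z s)"])
    show "((\<lambda>s. y s - z s) has_real_derivative g (y s) - g (z s)) (at s within {0..})"
      if "s \<ge> 0" for s
      using y_ODE[OF that] z_ODE[OF that] by (rule DERIV_diff)
    show "g (y s) - g (z s) \<ge> 0" if "s \<ge> 0" "y s - z s < 0" for s
      using g_antitone[OF y_in z_in, of s s] that by simp
  qed (use assms in auto)
  thus ?thesis by simp
qed

lemma linear_ODE_exp_decay:
  fixes d k :: "real \<Rightarrow> real"
  assumes der: "\<And>t. t \<ge> 0 \<Longrightarrow> (d has_real_derivative d t * k t) (at t within {0..})"
    and k_le: "\<And>t. t \<ge> 0 \<Longrightarrow> k t \<le> - \<delta>"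
    and "\<delta> \<ge> 0" and "0 \<le> d 0" and "d 0 \<le> c" and "t \<ge> 0"
  shows "0 \<le> d t" "d t \<le> c * exp (- (\<delta> * t))"
proof -
  show "0 \<le> d t"
  proof (rule nonneg_forward_invariant[OF _ der])
    show "d s * k s \<ge> 0" if "s \<ge> 0" "d s < 0" for s
      using k_le[OF that(1)] \<open>\<delta> \<ge> 0\<close> that(2) by (intro mult_nonpos_nonpos) auto
  qed (use assms in auto)
  \<comment> \<open>\<open>d(s) e\<^bsup>\<delta> s\<^esup>\<close> cannot grow while it exceeds \<open>c \<ge> 0\<close>\<close>
  have "c - d t * exp (\<delta> * t) \<ge> 0"
  proof (rule nonneg_forward_invariant[where d = "\<lambda>s. c - d s * exp (\<delta> * s)"
        and D = "\<lambda>s. - (d s * exp (\<delta> * s) * (k s + \<delta>))"])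
    show "((\<lambda>s. c - d s * exp (\<delta> * s)) has_real_derivative - (d s * exp (\<delta> * s) * (k s + \<delta>)))
        (at s within {0..})" if "s \<ge> 0" for s
      by (rule derivative_eq_intros der[OF that] refl)+ (simp add: algebra_simps)
    show "- (d s * exp (\<delta> * s) * (k s + \<delta>)) \<ge> 0"
      if "s \<ge> 0" "c - d s * exp (\<delta> * s) < 0" for s
    proof -
      have "d s * exp (\<delta> * s) \<ge> 0" using that \<open>0 \<le> d 0\<close> \<open>d 0 \<le> c\<close> by linarith
      thus ?thesis using k_le[OF that(1)] by (simp add: mult_nonneg_nonpos)
    qed
  qed (use assms in auto)
  thus "d t \<le> c * exp (- (\<delta> * t))" by (simp add: exp_minus field_simps)
qed

lemma has_real_derivative_at_max_on_interval:
  fixes \<phi> :: "real \<Rightarrow> real"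
  assumes der: "(\<phi> has_real_derivative D) (at p within {a..b})"
    and p: "p \<in> {a..b}" and max: "\<And>y. y \<in> {a..b} \<Longrightarrow> \<phi> y \<le> \<phi> p"
  shows "(p - a) * D \<ge> 0" "(b - p) * D \<le> 0"
proof -
  have "D \<le> 0" if "p < b"
  proof -
    have "(\<phi> has_real_derivative D) (at p within {p..b})"
      using der by (rule DERIV_subset) (use p in auto)
    hence "((\<lambda>y. (\<phi> y - \<phi> p) / (y - p)) \<longlongrightarrow> D) (at_right p)"
      using that by (simp add: has_field_derivative_iff at_within_Icc_at_right)
    moreover have "eventually (\<lambda>y. (\<phi> y - \<phi> p) / (y - p) \<le> 0) (at_right p)"
      unfolding eventually_at_right_field
      using that max p by (intro exI[of _ b]) (auto intro!: divide_nonpos_pos)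
    ultimately show "D \<le> 0" by (intro tendsto_upperbound) auto
  qed
  thus "(b - p) * D \<le> 0" using p by (cases "p < b") (auto intro: mult_nonneg_nonpos)
  have "D \<ge> 0" if "a < p"
  proof -
    have "(\<phi> has_real_derivative D) (at p within {a..p})"
      using der by (rule DERIV_subset) (use p in auto)
    hence "((\<lambda>y. (\<phi> y - \<phi> p) / (y - p)) \<longlongrightarrow> D) (at_left p)"
      using that by (simp add: has_field_derivative_iff at_within_Icc_at_left)
    moreover have "eventually (\<lambda>y. (\<phi> y - \<phi> p) / (y - p) \<ge> 0) (at_left p)"
      unfolding eventually_at_left_field
      using that max p by (intro exI[of _ a]) (auto intro!: divide_nonpos_neg)
    ultimately show "D \<ge> 0" by (intro tendsto_lowerbound) auto
  qed
  thus "(p - a) * D \<ge> 0" using p by (cases "a < p") auto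
qed

lemma C1_on_square_slice_has_derivative:
  assumes "C1_on_square h" and a: "a \<in> {0..1}"
  shows "\<exists>h'. \<forall>p\<in>{0..1}. ((\<lambda>p. h a p) has_real_derivative h' p) (at p within {0..1})"
proof -
  obtain D1 D2 :: "real \<times> real \<Rightarrow> real" where
    H: "\<And>z. z \<in> {0..1} \<times> {0..1} \<Longrightarrow>
           ((\<lambda>w. h (fst w) (snd w)) has_derivative (\<lambda>d. D1 z * fst d + D2 z * snd d))
             (at z within {0..1} \<times> {0..1})"
    using assms unfolding C1_on_square_def by blast
  have "((\<lambda>p. h a p) has_real_derivative D2 (a, p)) (at p within {0..1})" if p: "p \<in> {0..1}" for p
  proof -
    have pair: "((\<lambda>p. (a, p)) has_derivative (\<lambda>d. (0, d))) (at p within {0..1})"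
      by (intro has_derivative_Pair has_derivative_const has_derivative_ident)
    have "(\<lambda>p. (a, p)) ` {0..1} \<subseteq> {0..1} \<times> {0..1}" using a by auto
    from has_derivative_in_compose2[OF H this p pair]
    have "((\<lambda>p. h a p) has_derivative (\<lambda>d. D1 (a, p) * 0 + D2 (a, p) * d))
        (at p within {0..1})"
      by (simp only: fst_conv snd_conv)
    moreover have "(\<lambda>d. D1 (a, p) * 0 + D2 (a, p) * d) = (*) (D2 (a, p))" by auto
    ultimately show ?thesis by (simp only: has_field_derivative_def)
  qed
  thus ?thesis by (intro exI[of _ "\<lambda>p. D2 (a, p)"] ballI)
qed

lemma sel_rate_UN: "sel_rate (UN_policy p) p 0 j = 0" "sel_rate (UN_policy p) p 1 j = p j"
  by (auto simp: sel_rate_def UN_policy_def prof_def)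

lemma div_mult_cancel_le:
  "(a::real) \<le> b \<Longrightarrow> 0 \<le> a \<Longrightarrow> a / b * b = a"
  by (cases "b = 0") auto

lemma sel_rate_AA1:
  assumes "0 \<le> p GA" "0 \<le> p GB"
  shows "sel_rate (AA1_policy p) p 0 j = 0" "sel_rate (AA1_policy p) p 1 j = min (p GA) (p GB)"
  using assms div_mult_cancel_le[of "p GB" "p GA"] div_mult_cancel_le[of "p GA" "p GB"]
  by (cases j; auto simp: sel_rate_def AA1_policy_def AA1_wrt_def prof_def advantaged_def)+

lemma UNIV_grp: "(UNIV :: grp set) = {GA, GB}"
  using grp.exhaust by auto

lemma inst_utility_UN: "inst_utility gA u (UN_policy p) p = u 1 * (gA * p GA + (1 - gA) * p GB)"
  by (simp add: inst_utility_def UNIV_grp gfrac_def UN_policy_def prof_def algebra_simps)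

lemma inst_utility_AA1:
  assumes "0 \<le> p GB" "p GB \<le> p GA"
  shows "inst_utility gA u (AA1_policy p) p = u 1 * p GB"
  using assms div_mult_cancel_le[of "p GB" "p GA"]
  by (simp add: inst_utility_def UNIV_grp gfrac_def AA1_policy_def AA1_wrt_def advantaged_def
      prof_def algebra_simps)

lemma inst_utility_UN_ge_AA1:
  assumes "gA \<in> {0..1}" "0 \<le> u 1"
    and "0 \<le> q GB" "q GB \<le> q GA" "p GB \<le> p GA" "p GB = q GB"
  shows "inst_utility gA u (AA1_policy q) q \<le> inst_utility gA u (UN_policy p) p"
proof -
  have "q GB \<le> gA * p GA + (1 - gA) * p GB"
    using assms mult_left_mono[of "p GB" "p GA" gA] by (simp add: algebra_simps)
  thus ?thesis using assms by (simp add: inst_utility_UN inst_utility_AA1 mult_left_mono)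
qed

lemma ct_trajectory_in_unit:
  "ct_trajectory f0 f1 pol x \<Longrightarrow> t \<ge> 0 \<Longrightarrow> x t j \<in> {0..1}"
  unfolding ct_trajectory_def by blast

lemma ct_trajectory_has_derivative:
  assumes "ct_trajectory f0 f1 pol x" "t \<ge> 0"
    and "sel_rate (pol (x t)) (x t) 0 j = b0" "sel_rate (pol (x t)) (x t) 1 j = b1"
  shows "((\<lambda>s. x s j) has_real_derivative
      x t j * (f1 b0 b1 - 1) + (1 - x t j) * f0 b0 b1) (at t within {0..})"
proof -
  have "((\<lambda>s. x s j) has_real_derivative
      (let \<beta> = sel_rate (pol (x t)) (x t) in
         x t j * (f1 (\<beta> 0 j) (\<beta> 1 j) - 1) + (1 - x t j) * f0 (\<beta> 0 j) (\<beta> 1 j)))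
      (at t within {0..})"
    using assms(1,2) unfolding ct_trajectory_def by blast
  with assms(3,4) show ?thesis by (simp add: Let_def)
qed

lemma ct_trajectory_UN_deriv:
  assumes "ct_trajectory f0 f1 UN_policy x" "t \<ge> 0"
  shows "((\<lambda>s. x s j) has_real_derivative
      x t j * f1 0 (x t j) + (1 - x t j) * f0 0 (x t j) - x t j) (at t within {0..})"
  using ct_trajectory_has_derivative[OF assms sel_rate_UN] by (simp add: algebra_simps)

lemma ct_trajectory_AA1_deriv:
  assumes "ct_trajectory f0 f1 AA1_policy x" "t \<ge> 0"
  defines "m \<equiv> min (x t GA) (x t GB)"
  shows "((\<lambda>s. x s j) has_real_derivative
      x t j * (f1 0 m - 1) + (1 - x t j) * f0 0 m) (at t within {0..})"
proof -
  have "0 \<le> x t GA" "0 \<le> x t GB" using ct_trajectory_in_unit[OF assms(1,2)] by auto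
  from ct_trajectory_has_derivative[OF assms(1,2) sel_rate_AA1[OF this]] show ?thesis
    unfolding m_def .
qed

locale qualification_dynamics =
  fixes f0 f1 :: "real \<Rightarrow> real \<Rightarrow> real" and L :: real
  assumes f0_range: "\<And>a b. a \<in> {0..1} \<Longrightarrow> b \<in> {0..1} \<Longrightarrow> f0 a b \<in> {0..1}"
    and f1_range: "\<And>a b. a \<in> {0..1} \<Longrightarrow> b \<in> {0..1} \<Longrightarrow> f1 a b \<in> {0..1}"
    and f0_C1: "C1_on_square f0" and f1_C1: "C1_on_square f1"
    and L_lt_1: "L < 1"
    and deriv_bound: "\<And>\<pi> D. \<pi> \<in> {0..1} \<Longrightarrow>
      ((\<lambda>p. p * f1 0 p + (1 - p) * f0 0 p) has_real_derivative D) (at \<pi> within {0..1}) \<Longrightarrow>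
      \<bar>D\<bar> \<le> L"
begin

definition f :: "real \<Rightarrow> real" where
  "f p = p * f1 0 p + (1 - p) * f0 0 p"

definition max_gap :: real where
  "max_gap = (SUP \<pi>\<in>{0..1}. \<bar>f1 0 \<pi> - f0 0 \<pi>\<bar>)"

lemma slices_have_derivatives:
  "\<exists>f0'. \<forall>p\<in>{0..1}. ((\<lambda>p. f0 0 p) has_real_derivative f0' p) (at p within {0..1})"
  "\<exists>f1'. \<forall>p\<in>{0..1}. ((\<lambda>p. f1 0 p) has_real_derivative f1' p) (at p within {0..1})"
  using C1_on_square_slice_has_derivative f0_C1 f1_C1 by simp_all

lemma f_minus_id_antitone:
  assumes "a \<in> {0..1}" "b \<in> {0..1}" "a \<le> b"
  shows "f b - b \<le> f a - a"
proof -
  obtain f0' f1' where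
    f0': "\<And>p. p \<in> {0..1} \<Longrightarrow> ((\<lambda>p. f0 0 p) has_real_derivative f0' p) (at p within {0..1})" and
    f1': "\<And>p. p \<in> {0..1} \<Longrightarrow> ((\<lambda>p. f1 0 p) has_real_derivative f1' p) (at p within {0..1})"
    using slices_have_derivatives by force
  define f' where "f' p = f1 0 p + p * f1' p - f0 0 p + (1 - p) * f0' p" for p
  have der: "(f has_real_derivative f' p) (at p within {0..1})" if "p \<in> {0..1}" for p
    unfolding f_def[abs_def] f'_def using f0'[OF that] f1'[OF that]
    by (auto intro!: derivative_eq_intros simp: algebra_simps)
  have f'_le_1: "norm (f' p) \<le> 1" if "p \<in> {0..1}" for p
    using deriv_bound[OF that der[OF that, unfolded f_def[abs_def]]] L_lt_1 by simp
  have "norm (f b - f a) \<le> 1 * norm (b - a)"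
    using field_differentiable_bound[OF convex_real_interval(5) der f'_le_1] assms by blast
  thus ?thesis using assms by simp
qed

text \<open>If \<open>|f\<^sub>1(0,\<pi>) - f\<^sub>0(0,\<pi>)| = 1\<close>, then \<open>\<pi>\<close> is an extremum of both slices on \<open>[0,1]\<close>, which
  pushes \<open>f'(\<pi>) = f\<^sub>1 - f\<^sub>0 + \<pi> f\<^sub>1' + (1 - \<pi>) f\<^sub>0'\<close> outside \<open>(-1,1)\<close>.\<close>

lemma gap_lt_1:
  assumes p: "p \<in> {0..1}"
  shows "\<bar>f1 0 p - f0 0 p\<bar> < 1"
proof (rule ccontr)
  assume "\<not> ?thesis"
  with f0_range[of 0 p] f1_range[of 0 p] p
  consider "f1 0 p = 1" "f0 0 p = 0" | "f1 0 p = 0" "f0 0 p = 1" by fastforce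
  note cases = this
  obtain f0' f1' where
    "\<And>p. p \<in> {0..1} \<Longrightarrow> ((\<lambda>p. f0 0 p) has_real_derivative f0' p) (at p within {0..1})"
    "\<And>p. p \<in> {0..1} \<Longrightarrow> ((\<lambda>p. f1 0 p) has_real_derivative f1' p) (at p within {0..1})"
    using slices_have_derivatives by force
  with p have f0': "((\<lambda>p. f0 0 p) has_real_derivative f0' p) (at p within {0..1})"
    and f1': "((\<lambda>p. f1 0 p) has_real_derivative f1' p) (at p within {0..1})"
    by blast+
  have "((\<lambda>p. p * f1 0 p + (1 - p) * f0 0 p) has_real_derivative
      f1 0 p + p * f1' p - f0 0 p + (1 - p) * f0' p) (at p within {0..1})"
    using f0' f1' by (auto intro!: derivative_eq_intros simp: algebra_simps)
  hence bound: "\<bar>f1 0 p + p * f1' p - f0 0 p + (1 - p) * f0' p\<bar> \<le> L"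
    using deriv_bound p by blast
  have f0_max: "p * f0' p \<ge> 0" "(1 - p) * f0' p \<le> 0" if "f0 0 p = 1"
    using has_real_derivative_at_max_on_interval[OF f0' p] f0_range that by auto
  have f1_max: "p * f1' p \<ge> 0" "(1 - p) * f1' p \<le> 0" if "f1 0 p = 1"
    using has_real_derivative_at_max_on_interval[OF f1' p] f1_range that by auto
  have f0_min: "p * f0' p \<le> 0" "(1 - p) * f0' p \<ge> 0" if "f0 0 p = 0"
    using has_real_derivative_at_max_on_interval[OF DERIV_minus[OF f0'] p] f0_range that by auto
  have f1_min: "p * f1' p \<le> 0" "(1 - p) * f1' p \<ge> 0" if "f1 0 p = 0"
    using has_real_derivative_at_max_on_interval[OF DERIV_minus[OF f1'] p] f1_range that by auto
  from cases show False
    by cases (use bound L_lt_1 f0_max f1_max f0_min f1_min in \<open>auto simp: abs_if split: if_splits\<close>)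
qed

lemma max_gap_lt_1: "max_gap < 1"
proof -
  obtain f0' f1' where
    f0': "\<And>p. p \<in> {0..1} \<Longrightarrow> ((\<lambda>p. f0 0 p) has_real_derivative f0' p) (at p within {0..1})" and
    f1': "\<And>p. p \<in> {0..1} \<Longrightarrow> ((\<lambda>p. f1 0 p) has_real_derivative f1' p) (at p within {0..1})"
    using slices_have_derivatives by force
  have "continuous_on {0..1} (\<lambda>p. f0 0 p)" "continuous_on {0..1} (\<lambda>p. f1 0 p)"
    unfolding continuous_on_eq_continuous_within using f0' f1' DERIV_continuous by blast+
  hence "continuous_on {0..1} (\<lambda>p. \<bar>f1 0 p - f0 0 p\<bar>)" by (intro continuous_intros)
  from continuous_attains_sup[OF compact_Icc _ this]
  obtain q where q: "q \<in> {0..1}" "\<And>p. p \<in> {0..1} \<Longrightarrow> \<bar>f1 0 p - f0 0 p\<bar> \<le> \<bar>f1 0 q - f0 0 q\<bar>"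
    by auto
  hence "max_gap = \<bar>f1 0 q - f0 0 q\<bar>" unfolding max_gap_def by (intro cSup_eq_maximum) auto
  thus ?thesis using gap_lt_1[OF q(1)] by simp
qed

lemma gap_le_max_gap: "p \<in> {0..1} \<Longrightarrow> \<bar>f1 0 p - f0 0 p\<bar> \<le> max_gap"
  unfolding max_gap_def
  by (rule cSUP_upper, assumption, rule bdd_aboveI2[where M = 1]) (use gap_lt_1 in force)

lemma UN_trajectory_ODE:
  "ct_trajectory f0 f1 UN_policy x \<Longrightarrow> t \<ge> 0 \<Longrightarrow>
    ((\<lambda>s. x s j) has_real_derivative f (x t j) - x t j) (at t within {0..})"
  unfolding f_def by (rule ct_trajectory_UN_deriv)

lemma UN_trajectory_keeps_order:
  assumes x: "ct_trajectory f0 f1 UN_policy x" and "x 0 j \<le> x 0 i" and "t \<ge> 0"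
  shows "x t j \<le> x t i"
  by (rule antitone_ODE_comparison[where S = "{0..1}" and g = "\<lambda>p. f p - p"
        and y = "\<lambda>s. x s i" and z = "\<lambda>s. x s j", OF f_minus_id_antitone])
    (use assms ct_trajectory_in_unit[OF x] UN_trajectory_ODE[OF x] in auto)

lemma AA1_trajectory_gap_decay:
  assumes x: "ct_trajectory f0 f1 AA1_policy x" and "x 0 GB \<le> x 0 GA" and "t \<ge> 0"
  shows "0 \<le> x t GA - x t GB" "x t GA - x t GB \<le> exp (- ((1 - max_gap) * t))"
proof -
  define m where "m s = min (x s GA) (x s GB)" for s
  have m_unit: "m s \<in> {0..1}" if "s \<ge> 0" for s
    using ct_trajectory_in_unit[OF x that] by (auto simp: m_def min_def)
  have der: "((\<lambda>s. x s GA - x s GB) has_real_derivative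
      (x s GA - x s GB) * (f1 0 (m s) - f0 0 (m s) - 1)) (at s within {0..})" if "s \<ge> 0" for s
    using DERIV_diff[OF ct_trajectory_AA1_deriv[OF x that] ct_trajectory_AA1_deriv[OF x that]]
    by (simp add: m_def algebra_simps)
  have rate: "f1 0 (m s) - f0 0 (m s) - 1 \<le> - (1 - max_gap)" if "s \<ge> 0" for s
    using gap_le_max_gap[OF m_unit[OF that]] by linarith
  have "x 0 GA - x 0 GB \<le> 1"
    using ct_trajectory_in_unit[OF x order_refl, of GA] ct_trajectory_in_unit[OF x order_refl, of GB]
    by simp
  from linear_ODE_exp_decay[OF der rate _ _ this \<open>t \<ge> 0\<close>] max_gap_lt_1 assms(2)
  show "0 \<le> x t GA - x t GB" "x t GA - x t GB \<le> exp (- ((1 - max_gap) * t))"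
    by simp_all
qed

lemma AA1_disadvantaged_ODE:
  assumes x: "ct_trajectory f0 f1 AA1_policy x" and "x 0 GB \<le> x 0 GA" and "t \<ge> 0"
  shows "((\<lambda>s. x s GB) has_real_derivative f (x t GB) - x t GB) (at t within {0..})"
proof -
  have "min (x t GA) (x t GB) = x t GB" using AA1_trajectory_gap_decay(1)[OF assms] by simp
  thus ?thesis using ct_trajectory_AA1_deriv[OF x \<open>t \<ge> 0\<close>, of GB] by (simp add: f_def algebra_simps)
qed

lemma AA1_disadvantaged_follows_UN:
  assumes x: "ct_trajectory f0 f1 UN_policy x" and y: "ct_trajectory f0 f1 AA1_policy y"
    and "x 0 GB = y 0 GB" and "y 0 GB \<le> y 0 GA" and "t \<ge> 0"
  shows "x t GB = y t GB"
proof -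
  note comparison = antitone_ODE_comparison[where S = "{0..1}" and g = "\<lambda>p. f p - p",
      OF f_minus_id_antitone _ _ _ _ _ \<open>t \<ge> 0\<close>]
  note facts = assms ct_trajectory_in_unit[OF x] ct_trajectory_in_unit[OF y]
    UN_trajectory_ODE[OF x] AA1_disadvantaged_ODE[OF y \<open>y 0 GB \<le> y 0 GA\<close>]
  have "x t GB \<le> y t GB"
    by (rule comparison[where y = "\<lambda>s. y s GB" and z = "\<lambda>s. x s GB"]) (use facts in auto)
  moreover have "y t GB \<le> x t GB"
    by (rule comparison[where y = "\<lambda>s. x s GB" and z = "\<lambda>s. y s GB"]) (use facts in auto)
  ultimately show ?thesis by simp
qed

lemma AA1_trajectory_reaches_equality:
  assumes "ct_trajectory f0 f1 AA1_policy x" and "x 0 GB \<le> x 0 GA"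
  shows "reaches_equality x"
  unfolding reaches_equality_def
proof (rule tendsto_sandwich[OF _ _ tendsto_const])
  show "((\<lambda>t. exp (- ((1 - max_gap) * t))) \<longlongrightarrow> 0) at_top"
    using max_gap_lt_1
    by (intro filterlim_compose[OF exp_at_bot] filterlim_compose[OF filterlim_uminus_at_bot_at_top]
        filterlim_tendsto_pos_mult_at_top[OF tendsto_const _ filterlim_ident]) auto
  show "\<forall>\<^sub>F t in at_top. 0 \<le> \<bar>x t GA - x t GB\<bar>" by simp
  show "\<forall>\<^sub>F t in at_top. \<bar>x t GA - x t GB\<bar> \<le> exp (- ((1 - max_gap) * t))"
    using eventually_ge_at_top[of "0::real"]
    by eventually_elim (use AA1_trajectory_gap_decay[OF assms] in auto)
qed

end

theorem mainTheorem10: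
  fixes f0 f1 :: "real \<Rightarrow> real \<Rightarrow> real"
    and gA LUN :: real and u :: "nat \<Rightarrow> real"
    and xUN xAA :: "real \<Rightarrow> grp \<Rightarrow> real"
  assumes f0_range: "\<forall>a\<in>{0..1}. \<forall>b\<in>{0..1}. f0 a b \<in> {0..1}"
    and f1_range: "\<forall>a\<in>{0..1}. \<forall>b\<in>{0..1}. f1 a b \<in> {0..1}"
    and f0_C1: "C1_on_square f0" and f1_C1: "C1_on_square f1"
    and gA: "gA \<in> {0..1}"
    and u: "u 0 \<le> 0" "0 \<le> u 1"
    and LUN: "LUN < 1"
    and fderiv: "\<forall>\<pi>\<in>{0..1}. \<forall>D.
        ((\<lambda>p. p * f1 0 p + (1 - p) * f0 0 p) has_real_derivative D) (at \<pi> within {0..1})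
          \<longrightarrow> \<bar>D\<bar> \<le> LUN"
    and gA_cond: "gA * u 1 + (1 - gA) * u 0 \<le> 0"
    and UN_traj: "ct_trajectory f0 f1 UN_policy xUN"
    and AA_traj: "ct_trajectory f0 f1 AA1_policy xAA"
    and same_init: "xUN 0 = xAA 0"
    and A_adv0: "xAA 0 GA \<ge> xAA 0 GB"
  shows "(SUP \<pi>\<in>{0..1}. \<bar>f1 0 \<pi> - f0 0 \<pi>\<bar>) < 1
       \<and> reaches_equality xAA
       \<and> (\<forall>t\<ge>0. inst_utility gA u (UN_policy (xUN t)) (xUN t) \<ge> inst_utility gA u (AA1_policy (xAA t)) (xAA t))"
proof -
  \<comment> \<open>\<open>gA_cond\<close> and \<open>u 0 \<le> 0\<close> only make AA1 the optimal policy with equal selection rates;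
    the comparison with UN does not need them.\<close>
  interpret qualification_dynamics f0 f1 LUN
    using f0_range f1_range f0_C1 f1_C1 LUN fderiv by unfold_locales auto
  have "xUN t GB = xAA t GB" if "t \<ge> 0" for t
    using AA1_disadvantaged_follows_UN[OF UN_traj AA_traj _ A_adv0 that] same_init by simp
  moreover have "xUN t GB \<le> xUN t GA" if "t \<ge> 0" for t
    using UN_trajectory_keeps_order[OF UN_traj _ that] A_adv0 same_init by simp
  ultimately have "inst_utility gA u (AA1_policy (xAA t)) (xAA t)
      \<le> inst_utility gA u (UN_policy (xUN t)) (xUN t)" if "t \<ge> 0" for t
    using inst_utility_UN_ge_AA1[of gA u] gA u(2) AA1_trajectory_gap_decay(1)[OF AA_traj A_adv0 that]
      ct_trajectory_in_unit[OF AA_traj that] that by simp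
  thus ?thesis
    using max_gap_lt_1 AA1_trajectory_reaches_equality[OF AA_traj A_adv0]
    unfolding max_gap_def by auto
qed

end
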